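(* Let $\mathcal{F}$ be a $\mathbb{Z}$-graded (super)manifold, $k$ an integer, $\omega$ a symplectic form on $\mathcal{F}$ with $\mathrm{gh}(\omega)=k-1$, $\mathcal{S}$ a function with $\mathrm{gh}(\mathcal{S})=k$, $\mathcal{Q}$ a vector field with $\mathrm{gh}(\mathcal{Q})=1$, and $\mathcal{T}$ a function with $\mathrm{gh}(\mathcal{T})=k+1$ such that $\frac12\iota_{[\mathcal{Q},\mathcal{Q}]}\omega=-\delta\mathcal{T}$. Set $\underline{\alpha}:=\iota_\mathcal{Q}\omega-\delta\mathcal{S}$, $\underline{\omega}:=\delta\underline{\alpha}$, and $\ker\underline{\omega}:=\{Y\in\mathfrak{X}(\mathcal{F})\mid \iota_Y\underline{\omega}=0\}$. Then $\mathcal{Q}$ is projectable with respect to the foliation defined by $\ker\underline{\omega}$: for every $Y\in\ker\underline{\omega}$ one has $[\mathcal{Q},Y]\in\ker\underline{\omega}$.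
   Context: $\delta$ is the de Rham differential on $\mathcal{F}$, $\mathrm{gh}$ the ghost number, $[\cdot,\cdot]$ the graded commutator of vector fields. Conventions: $L_\mathcal{Q}=\iota_\mathcal{Q}\delta-\delta\iota_\mathcal{Q}$ on forms, $L_\mathcal{Q}L_\mathcal{Q}=\frac12 L_{[\mathcal{Q},\mathcal{Q}]}$, and $[L_X,\iota_Y]=\iota_{[X,Y]}$ (graded commutators). $\mathcal{Q}$ is not assumed cohomological. *)

theory Defs
  imports "HOL-Analysis.Analysis"
begin

text \<open>Abstract model of the Cartan calculus on a Z-graded (super)manifold F.
  'w : differential forms on F (all form degrees; functions are the 0-forms),
  'v : vector fields on F.
  d     : de Rham differential delta,
  iota  : contraction,
  br    : graded commutator of vector fields,
  vgh X p : X is homogeneous of ghost number p,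
  fgh a n : the form a is homogeneous of ghost number n,
  fdeg a m: the form a has form degree m.\<close>

definition lie :: "('v \<Rightarrow> 'w \<Rightarrow> 'w::real_vector) \<Rightarrow> ('w \<Rightarrow> 'w) \<Rightarrow> 'v \<Rightarrow> 'w \<Rightarrow> 'w" where
  "lie iota d X a = iota X (d a) - d (iota X a)"

definition graded_sign :: "int \<Rightarrow> real" where
  "graded_sign n = (if even n then 1 else -1)"

definition cartan_calculus ::
  "('w::real_vector \<Rightarrow> 'w) \<Rightarrow> ('v::real_vector \<Rightarrow> 'w \<Rightarrow> 'w) \<Rightarrow> ('v \<Rightarrow> 'v \<Rightarrow> 'v)
   \<Rightarrow> ('v \<Rightarrow> int \<Rightarrow> bool) \<Rightarrow> ('w \<Rightarrow> int \<Rightarrow> bool) \<Rightarrow> ('w \<Rightarrow> nat \<Rightarrow> bool) \<Rightarrow> bool" where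
  "cartan_calculus d iota br vgh fgh fdeg \<longleftrightarrow>
     linear d \<and> (\<forall>X. linear (iota X)) \<and> (\<forall>a. linear (\<lambda>X. iota X a))
   \<and> (\<forall>X. linear (br X)) \<and> (\<forall>Y. linear (\<lambda>X. br X Y))
   \<and> (\<forall>a. d (d a) = 0)
   \<comment> \<open>ghost grading of vector fields\<close>
   \<and> (\<forall>p. vgh 0 p)
   \<and> (\<forall>X Y p. vgh X p \<and> vgh Y p \<longrightarrow> vgh (X + Y) p)
   \<and> (\<forall>X c p. vgh X p \<longrightarrow> vgh (c *\<^sub>R X) p)
   \<and> (\<forall>Y. \<exists>(F::int set) c. finite F \<and> (\<forall>n\<in>F. vgh (c n) n) \<and> Y = (\<Sum>n\<in>F. c n))
   \<and> (\<forall>X Y p q. vgh X p \<and> vgh Y q \<longrightarrow> vgh (br X Y) (p + q))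
   \<comment> \<open>ghost grading of forms\<close>
   \<and> (\<forall>n. fgh 0 n)
   \<and> (\<forall>a b n. fgh a n \<and> fgh b n \<longrightarrow> fgh (a + b) n)
   \<and> (\<forall>a c n. fgh a n \<longrightarrow> fgh (c *\<^sub>R a) n)
   \<and> (\<forall>(F::int set) c. finite F \<and> (\<forall>n\<in>F. fgh (c n) n) \<and> (\<Sum>n\<in>F. c n) = 0
          \<longrightarrow> (\<forall>n\<in>F. c n = 0))
   \<and> (\<forall>a n. fgh a n \<longrightarrow> fgh (d a) n)
   \<and> (\<forall>X a p n. vgh X p \<and> fgh a n \<longrightarrow> fgh (iota X a) (n + p))
   \<comment> \<open>form degree\<close>
   \<and> (\<forall>m. fdeg 0 m)
   \<and> (\<forall>a b m. fdeg a m \<and> fdeg b m \<longrightarrow> fdeg (a + b) m)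
   \<and> (\<forall>a c m. fdeg a m \<longrightarrow> fdeg (c *\<^sub>R a) m)
   \<and> (\<forall>a m. fdeg a m \<longrightarrow> fdeg (d a) (Suc m))
   \<and> (\<forall>X a m. fdeg a (Suc m) \<longrightarrow> fdeg (iota X a) m)
   \<and> (\<forall>X a. fdeg a 0 \<longrightarrow> iota X a = 0)
   \<comment> \<open>Cartan identities for odd vector fields (where L_X = iota_X d - d iota_X)\<close>
   \<and> (\<forall>X p a. vgh X p \<and> odd p \<longrightarrow>
          lie iota d X (lie iota d X a) = (1/2) *\<^sub>R lie iota d (br X X) a)
   \<and> (\<forall>X Y p q a. vgh X p \<and> odd p \<and> vgh Y q \<longrightarrow>
          iota (br X Y) a = lie iota d X (iota Y a)
                            - graded_sign (p * (q - 1)) *\<^sub>R iota Y (lie iota d X a))"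

definition symplectic ::
  "('w::real_vector \<Rightarrow> 'w) \<Rightarrow> ('v::real_vector \<Rightarrow> 'w \<Rightarrow> 'w) \<Rightarrow> ('w \<Rightarrow> nat \<Rightarrow> bool) \<Rightarrow> 'w \<Rightarrow> bool" where
  "symplectic d iota fdeg \<omega> \<longleftrightarrow> fdeg \<omega> 2 \<and> d \<omega> = 0 \<and> (\<forall>Y. iota Y \<omega> = 0 \<longrightarrow> Y = 0)"

definition kernel_of :: "('v \<Rightarrow> 'w \<Rightarrow> 'w::zero) \<Rightarrow> 'w \<Rightarrow> 'v set" where
  "kernel_of iota \<eta> = {Y. iota Y \<eta> = 0}"

end

theory Submission
  imports Defs
begin

text \<open>Write \<open>\<Omega> = \<delta>(\<iota>\<^sub>Q\<omega> - \<delta>S) = \<delta>\<iota>\<^sub>Q\<omega>\<close>. For the closed form \<open>\<omega>\<close> the Cartan identity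
  gives \<open>\<iota>\<^bsub>[Q,Q]\<^esub>\<omega> = 2 \<iota>\<^sub>Q\<delta>\<iota>\<^sub>Q\<omega> - \<delta>\<iota>\<^sub>Q\<iota>\<^sub>Q\<omega>\<close>, so the hypothesis on \<open>[Q,Q]\<close> says
  that \<open>\<iota>\<^sub>Q\<Omega>\<close> is exact, whence \<open>L\<^sub>Q\<Omega> = -\<delta>\<iota>\<^sub>Q\<Omega> = 0\<close>. Then
  \<open>\<iota>\<^bsub>[Q,Y]\<^esub>\<Omega> = L\<^sub>Q\<iota>\<^sub>Y\<Omega>\<close> (for homogeneous \<open>Y\<close> by the Cartan identity, for all
  \<open>Y\<close> by linearity), which vanishes for \<open>Y \<in> ker \<Omega>\<close>.\<close>

lemma cartan_calculus_linear:
  assumes "cartan_calculus d iota br vgh fgh fdeg"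
  shows "linear d" "linear (iota X)" "linear (\<lambda>X. iota X a)" "linear (br X)"
  using assms unfolding cartan_calculus_def by (elim conjE; simp)+

lemma cartan_calculus_dd:
  assumes "cartan_calculus d iota br vgh fgh fdeg"
  shows "d (d a) = 0"
  using assms unfolding cartan_calculus_def by (elim conjE) simp

lemma cartan_calculus_homogeneous_decomposition:
  assumes "cartan_calculus d iota br vgh fgh fdeg"
  obtains F :: "int set" and c where "finite F" "\<And>n. n \<in> F \<Longrightarrow> vgh (c n) n" "Y = (\<Sum>n\<in>F. c n)"
  using assms unfolding cartan_calculus_def by (elim conjE) meson

lemma cartan_calculus_iota_br:
  assumes "cartan_calculus d iota br vgh fgh fdeg" "vgh X p" "odd p" "vgh Y q"
  shows "iota (br X Y) a
           = lie iota d X (iota Y a) - graded_sign (p * (q - 1)) *\<^sub>R iota Y (lie iota d X a)"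
  using assms unfolding cartan_calculus_def by (elim conjE) meson

lemma linear_lie:
  assumes "linear d" "linear (iota X)"
  shows "linear (lie iota d X)"
proof -
  have "linear (iota X \<circ> d)" "linear (d \<circ> iota X)"
    using assms by (auto intro: linear_compose)
  then show ?thesis
    unfolding lie_def[abs_def] using linear_compose_sub by (auto simp: o_def)
qed

lemma lie_exact:
  assumes "cartan_calculus d iota br vgh fgh fdeg"
  shows "lie iota d X (d a) = - d (iota X (d a))"
  using cartan_calculus_dd[OF assms] linear_0[OF cartan_calculus_linear(2)[OF assms]]
  by (simp add: lie_def)

lemma iota_br_self_closed:
  assumes calc: "cartan_calculus d iota br vgh fgh fdeg"
    and X: "vgh X p" "odd p" and closed: "d \<omega> = 0"
  shows "iota (br X X) \<omega> = 2 *\<^sub>R iota X (d (iota X \<omega>)) - d (iota X (iota X \<omega>))"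
proof -
  have "graded_sign (p * (p - 1)) = 1"
    using \<open>odd p\<close> by (simp add: graded_sign_def)
  moreover have "lie iota d X \<omega> = - d (iota X \<omega>)"
    using closed linear_0[OF cartan_calculus_linear(2)[OF calc]] by (simp add: lie_def)
  moreover have "iota X (- x) = - iota X x" for x
    using linear_neg[OF cartan_calculus_linear(2)[OF calc]] .
  ultimately show ?thesis
    using cartan_calculus_iota_br[OF calc X X(1), of \<omega>]
    by (simp add: lie_def scaleR_2 algebra_simps)
qed

lemma iota_br_invariant:
  assumes calc: "cartan_calculus d iota br vgh fgh fdeg"
    and X: "vgh X p" "odd p" and invariant: "lie iota d X \<eta> = 0"
  shows "iota (br X Y) \<eta> = lie iota d X (iota Y \<eta>)"
proof -
  obtain F c where F: "finite F" "\<And>n. n \<in> F \<Longrightarrow> vgh (c n) n" and Y: "Y = (\<Sum>n\<in>F. c n)"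
    using cartan_calculus_homogeneous_decomposition[OF calc, of Y] by blast
  have lin_iota_br: "linear (\<lambda>Z. iota (br X Z) \<eta>)"
    using linear_compose[OF cartan_calculus_linear(4,3)[OF calc]] by (simp add: o_def)
  have lin_lie_iota: "linear (\<lambda>Z. lie iota d X (iota Z \<eta>))"
    using linear_compose[OF cartan_calculus_linear(3)[OF calc]
        linear_lie[OF cartan_calculus_linear(1,2)[OF calc]]]
    by (simp add: o_def)
  have homogeneous: "iota (br X (c n)) \<eta> = lie iota d X (iota (c n) \<eta>)" if "n \<in> F" for n
    using cartan_calculus_iota_br[OF calc X F(2)[OF that], of \<eta>] invariant
      linear_0[OF cartan_calculus_linear(2)[OF calc]]
    by simp
  have "iota (br X Y) \<eta> = (\<Sum>n\<in>F. iota (br X (c n)) \<eta>)"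
    unfolding Y using linear_sum[OF lin_iota_br] by simp
  also have "\<dots> = (\<Sum>n\<in>F. lie iota d X (iota (c n) \<eta>))"
    using homogeneous by (rule sum.cong[OF refl])
  also have "\<dots> = lie iota d X (iota Y \<eta>)"
    unfolding Y using linear_sum[OF lin_lie_iota, of c F] by (rule sym)
  finally show ?thesis .
qed

lemma br_kernel_of_invariant:
  assumes calc: "cartan_calculus d iota br vgh fgh fdeg"
    and X: "vgh X p" "odd p" and invariant: "lie iota d X \<eta> = 0"
    and Y: "Y \<in> kernel_of iota \<eta>"
  shows "br X Y \<in> kernel_of iota \<eta>"
  using iota_br_invariant[OF calc X invariant, of Y] Y
    linear_0[OF linear_lie[OF cartan_calculus_linear(1,2)[OF calc]]]
  by (simp add: kernel_of_def)

theorem mainTheorem11: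
  fixes d :: "'w::real_vector \<Rightarrow> 'w" and iota :: "'v::real_vector \<Rightarrow> 'w \<Rightarrow> 'w"
    and br :: "'v \<Rightarrow> 'v \<Rightarrow> 'v" and vgh :: "'v \<Rightarrow> int \<Rightarrow> bool"
    and fgh :: "'w \<Rightarrow> int \<Rightarrow> bool" and fdeg :: "'w \<Rightarrow> nat \<Rightarrow> bool"
    and k :: int and \<omega> S T :: 'w and Q :: 'v
  assumes calc: "cartan_calculus d iota br vgh fgh fdeg"
    and symp: "symplectic d iota fdeg \<omega>" and gh_omega: "fgh \<omega> (k - 1)"
    and S_fun: "fdeg S 0" and gh_S: "fgh S k"
    and gh_Q: "vgh Q 1"
    and T_fun: "fdeg T 0" and gh_T: "fgh T (k + 1)"
    and QQ: "(1/2) *\<^sub>R iota (br Q Q) \<omega> = - d T"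
  shows "\<forall>Y \<in> kernel_of iota (d (iota Q \<omega> - d S)).
           br Q Y \<in> kernel_of iota (d (iota Q \<omega> - d S))"
proof -
  have lin_d: "linear d" by (rule cartan_calculus_linear(1)[OF calc])
  have omega_bar: "d (iota Q \<omega> - d S) = d (iota Q \<omega>)"
    using linear_diff[OF lin_d] cartan_calculus_dd[OF calc] by simp
  have "iota (br Q Q) \<omega> = 2 *\<^sub>R iota Q (d (iota Q \<omega>)) - d (iota Q (iota Q \<omega>))"
    using iota_br_self_closed[OF calc gh_Q odd_one] symp by (simp add: symplectic_def)
  with QQ have "iota Q (d (iota Q \<omega>)) = (1/2) *\<^sub>R d (iota Q (iota Q \<omega>)) - d T"
    by (simp add: algebra_simps)
  then have exact: "iota Q (d (iota Q \<omega>)) = d ((1/2) *\<^sub>R iota Q (iota Q \<omega>) - T)"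
    using linear_diff[OF lin_d] linear_scale[OF lin_d] by simp
  have "lie iota d Q (d (iota Q \<omega> - d S)) = 0"
    unfolding omega_bar lie_exact[OF calc] exact cartan_calculus_dd[OF calc] by simp
  then show ?thesis
    using br_kernel_of_invariant[OF calc gh_Q odd_one] by blast
qed

end
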